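(* Let $S\subseteq\mathbb{S}$ be nonempty with $1\notin S$, and let $i^*=\min S$ be the highest-quality product in $S$. Then $\overline{re}\big((S\setminus\{i^*\})\cup\{1\}\big)\ge\overline{re}(S)$. In particular, there is a revenue-maximizing displayed set that contains product $1$.
   Context: Market model: sellers $\mathbb{S}=\{1,\dots,n\}$, product qualities $\theta_1\ge\theta_2\ge\dots\ge\theta_n\ge0$. For displayed set $S$ and prices $p_i\ge0$: $a_i=e^{\theta_i-p_i}$, MNL demand $q_i=a_i/(1+\sum_{j\in S}a_j)$; sellers in $S$ play the Bertrand game (seller $i$ chooses $p_i\ge0$ to maximize $p_iq_i$). $V:(0,\infty)\to(0,1)$: $V(x)=$ the unique $v\in(0,1)$ with $v\exp(v/(1-v))=x$. For nonempty $S$, $\bar q_0(S)\in(0,1)$ is the unique solution of $\sum_{i\in S}V(\bar q_0e^{\theta_i-1})=1-\bar q_0$, and $\bar q_i(S)=V(\bar q_0(S)e^{\theta_i-1})$ are the equilibrium demands. The equilibrium revenue is $\overline{re}(S)=\sum_{i\in S}\frac{\bar q_i(S)}{1-\bar q_i(S)}$, with $\overline{re}(\emptyset)=0$. *)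

theory Defs
  imports Complex_Main
begin

definition V :: "real \<Rightarrow> real" where
  "V x = (THE v. 0 < v \<and> v < 1 \<and> v * exp (v / (1 - v)) = x)"

text \<open>Equilibrium no-purchase share: unique q0 in (0,1) with
  sum_{i in S} V(q0 e^{theta_i - 1}) = 1 - q0.\<close>
definition q0bar :: "(nat \<Rightarrow> real) \<Rightarrow> nat set \<Rightarrow> real" where
  "q0bar \<theta> S = (THE q. 0 < q \<and> q < 1 \<and>
      (\<Sum>i\<in>S. V (q * exp (\<theta> i - 1))) = 1 - q)"

definition qbar :: "(nat \<Rightarrow> real) \<Rightarrow> nat set \<Rightarrow> nat \<Rightarrow> real" where
  "qbar \<theta> S i = V (q0bar \<theta> S * exp (\<theta> i - 1))"

definition re :: "(nat \<Rightarrow> real) \<Rightarrow> nat set \<Rightarrow> real" where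
  "re \<theta> S = (if S = {} then 0 else (\<Sum>i\<in>S. qbar \<theta> S i / (1 - qbar \<theta> S i)))"

end

theory Submission imports Defs begin

text \<open>Replacing the lowest-quality product j of S by product 1 lowers the
  no-purchase share q0, since each term V(q0 e^(theta_i - 1)) increases with q0
  and the swapped-in term also increases with quality. Hence every retained
  product loses demand, and product 1 gains at least the total demand lost.
  Revenue is a sum of odds v/(1-v), convex and increasing on (0,1). All retained
  demands lie below the old demand v_j of j, so their odds losses are at most
  (1 - v_j)^-2 times their demand losses, while the odds gained in passing from
  v_j to the new demand of product 1 are at least that slope times the gain.\<close>

definition Vinv :: "real \<Rightarrow> real" where
  "Vinv v = v * exp (v / (1 - v))"

lemma Vinv_strict_mono:
  assumes "0 < v" "v < u" "u < 1"
  shows "Vinv v < Vinv u"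
proof -
  have "exp (v / (1 - v)) < exp (u / (1 - u))"
    using assms by (simp add: frac_less)
  then show ?thesis
    unfolding Vinv_def using assms by (intro mult_strict_mono) auto
qed

lemma Vinv_inj:
  assumes "0 < v" "v < 1" "0 < u" "u < 1" "Vinv v = Vinv u"
  shows "v = u"
  using Vinv_strict_mono assms by (metis linorder_neqE_linordered_idom less_irrefl)

lemma Vinv_ge_self:
  assumes "0 < v" "v < 1"
  shows "v \<le> Vinv v"
  unfolding Vinv_def using assms mult_left_mono[of 1 "exp (v / (1 - v))" v] by simp

lemma isCont_Vinv: "z < 1 \<Longrightarrow> isCont Vinv z"
  unfolding Vinv_def by (intro continuous_intros) auto

lemma Vinv_surj:
  assumes "0 < x"
  shows "\<exists>v. 0 < v \<and> v < 1 \<and> Vinv v = x"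
proof -
  define a where "a = min (1/2) (x / (2 * exp 1))"
  define b where "b = (2 * x + 1) / (2 * x + 2)"
  have a: "0 < a" "a \<le> 1/2" using assms by (auto simp: a_def)
  have b: "1/2 \<le> b" "b < 1" using assms by (auto simp: b_def field_simps)
  have "a / (1 - a) \<le> 1" using a by (simp add: field_simps)
  then have "Vinv a \<le> a * exp 1" unfolding Vinv_def using a by simp
  also have "\<dots> \<le> x / 2" using assms by (simp add: a_def min_def field_simps)
  finally have Va: "Vinv a \<le> x" using assms by simp
  have "b / (1 - b) = 2 * x + 1" using assms by (simp add: b_def field_simps)
  then have "b * (1 + (2 * x + 1)) \<le> Vinv b"
    unfolding Vinv_def using b exp_ge_add_one_self[of "b / (1 - b)"]
    by (intro mult_left_mono) auto
  moreover have "b * (1 + (2 * x + 1)) = 2 * x + 1"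
    using assms by (simp add: b_def field_simps)
  ultimately have Vb: "x \<le> Vinv b" using assms by linarith
  obtain v where "a \<le> v" "v \<le> b" "Vinv v = x"
    using IVT[of Vinv a x b, OF Va Vb] a b isCont_Vinv by auto
  then show ?thesis using a b by (intro exI[of _ v]) auto
qed

lemma V_props:
  assumes "0 < x"
  shows "0 < V x" "V x < 1" "Vinv (V x) = x"
proof -
  have "\<exists>!v. 0 < v \<and> v < 1 \<and> v * exp (v / (1 - v)) = x"
    using Vinv_surj[OF assms] Vinv_inj unfolding Vinv_def by metis
  then have "0 < V x \<and> V x < 1 \<and> Vinv (V x) = x"
    unfolding V_def Vinv_def by (rule theI')
  then show "0 < V x" "V x < 1" "Vinv (V x) = x" by auto
qed

lemma V_Vinv:
  assumes "0 < v" "v < 1"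
  shows "V (Vinv v) = v"
proof -
  have "0 < Vinv v" using assms by (simp add: Vinv_def)
  then show ?thesis using V_props Vinv_inj assms by blast
qed

lemma V_mono:
  assumes "0 < x" "x \<le> y"
  shows "V x \<le> V y"
proof (rule ccontr)
  assume "\<not> V x \<le> V y"
  then have "Vinv (V y) < Vinv (V x)" using V_props assms by (intro Vinv_strict_mono) auto
  then show False using V_props assms by auto
qed

lemma V_le_self: "0 < x \<Longrightarrow> V x \<le> x"
  using Vinv_ge_self V_props by metis

lemma isCont_V:
  assumes "0 < x"
  shows "isCont V x"
proof -
  have v: "0 < V x" "V x < 1" "Vinv (V x) = x" using V_props assms by auto
  have "isCont V (Vinv (V x))"
    by (rule isCont_inverse_function2[of "V x / 2" _ "(V x + 1) / 2"])
       (use v in \<open>auto intro!: V_Vinv isCont_Vinv\<close>)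
  then show ?thesis using v by simp
qed

lemma share_equation_has_root:
  fixes c :: "nat \<Rightarrow> real"
  assumes "finite S" "S \<noteq> {}" "\<And>i. 0 < c i"
  shows "\<exists>q. 0 < q \<and> q < 1 \<and> (\<Sum>i\<in>S. V (q * c i)) = 1 - q"
proof -
  define G where "G q = (\<Sum>i\<in>S. V (q * c i)) + q" for q
  define C where "C = (\<Sum>i\<in>S. c i)"
  have C: "0 \<le> C" unfolding C_def using assms(3) by (simp add: sum_nonneg less_imp_le)
  define a where "a = 1 / (2 * (C + 1))"
  have a: "0 < a" "a \<le> 1/2" using C by (auto simp: a_def field_simps)
  have "G a \<le> (\<Sum>i\<in>S. a * c i) + a"
    unfolding G_def using V_le_self a assms(3) by (intro add_right_mono sum_mono) auto
  also have "\<dots> = a * (C + 1)" by (simp add: C_def sum_distrib_left algebra_simps)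
  also have "\<dots> = 1/2" using C by (simp add: a_def)
  finally have Ga: "G a \<le> 1" by simp
  obtain i0 where i0: "i0 \<in> S" using assms(2) by auto
  define m where "m = V (c i0 / 2)"
  have m: "0 < m" "m < 1" using V_props[of "c i0 / 2"] assms(3) by (auto simp: m_def)
  define b where "b = max (1/2) (1 - m / 2)"
  have b: "1/2 \<le> b" "b < 1" "1 - m / 2 \<le> b" using m by (auto simp: b_def)
  have "m \<le> V (b * c i0)"
    unfolding m_def using assms(3)[of i0] b by (intro V_mono) auto
  also have "\<dots> \<le> (\<Sum>i\<in>S. V (b * c i))"
    using assms i0 V_props b by (intro member_le_sum) (auto intro: less_imp_le)
  finally have Gb: "1 \<le> G b" using b unfolding G_def by linarith
  have "isCont G q" if "0 < q" for q
    unfolding G_def using that assms(3)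
    by (intro continuous_intros isCont_sum ballI isCont_o2[OF _ isCont_V]) auto
  then obtain q where "a \<le> q" "q \<le> b" "G q = 1"
    using IVT[of G a 1 b, OF Ga Gb] a b by auto
  then show ?thesis using a b unfolding G_def by (intro exI[of _ q]) auto
qed

lemma share_equation_root_unique:
  fixes c :: "nat \<Rightarrow> real"
  assumes "\<And>i. 0 < c i"
    and p: "0 < p" "(\<Sum>i\<in>S. V (p * c i)) = 1 - p"
    and q: "0 < q" "(\<Sum>i\<in>S. V (q * c i)) = 1 - q"
  shows "p = q"
proof -
  have mono: "(\<Sum>i\<in>S. V (p * c i)) \<le> (\<Sum>i\<in>S. V (q * c i))" if "0 < p" "p \<le> q" for p q
    using that assms(1) by (intro sum_mono V_mono) (auto intro: mult_right_mono)
  have "\<not> p < q" "\<not> q < p" using mono[of p q] mono[of q p] p q by auto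
  then show ?thesis by linarith
qed

lemma q0bar_props:
  assumes "finite S" "S \<noteq> {}"
  shows "0 < q0bar \<theta> S" "q0bar \<theta> S < 1"
    "(\<Sum>i\<in>S. qbar \<theta> S i) = 1 - q0bar \<theta> S"
proof -
  have "\<exists>!q. 0 < q \<and> q < 1 \<and> (\<Sum>i\<in>S. V (q * exp (\<theta> i - 1))) = 1 - q"
    using share_equation_has_root[OF assms, of "\<lambda>i. exp (\<theta> i - 1)"]
      share_equation_root_unique[of "\<lambda>i. exp (\<theta> i - 1)"] by auto
  from theI'[OF this] show "0 < q0bar \<theta> S" "q0bar \<theta> S < 1"
    "(\<Sum>i\<in>S. qbar \<theta> S i) = 1 - q0bar \<theta> S"
    unfolding q0bar_def[symmetric] qbar_def by auto
qed

lemma qbar_bounds: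
  assumes "finite S" "S \<noteq> {}"
  shows "0 < qbar \<theta> S i" "qbar \<theta> S i < 1"
  using V_props[of "q0bar \<theta> S * exp (\<theta> i - 1)"] q0bar_props[OF assms, of \<theta>]
  by (auto simp: qbar_def)

lemma qbar_mono:
  assumes "finite S" "S \<noteq> {}" "q0bar \<theta> S \<le> q0bar \<theta> T" "\<theta> i \<le> \<theta> k"
  shows "qbar \<theta> S i \<le> qbar \<theta> T k"
  unfolding qbar_def using q0bar_props[OF assms(1,2), of \<theta>] assms(3,4)
  by (intro V_mono mult_mono) auto

lemma re_nonneg: "0 \<le> re \<theta> S"
proof (cases "finite S \<and> S \<noteq> {}")
  case True
  then have "0 \<le> qbar \<theta> S i / (1 - qbar \<theta> S i)" for i
    using qbar_bounds[of S \<theta> i] by simp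
  then show ?thesis by (simp add: re_def sum_nonneg)
qed (auto simp: re_def)

lemma q0bar_replace_antimono:
  assumes "finite R" "j \<notin> R" "k \<notin> R" "\<theta> j \<le> \<theta> k"
  shows "q0bar \<theta> (insert k R) \<le> q0bar \<theta> (insert j R)"
proof (rule ccontr)
  let ?S = "insert j R" and ?T = "insert k R"
  assume "\<not> ?thesis"
  then have lt: "q0bar \<theta> ?S < q0bar \<theta> ?T" by simp
  have "qbar \<theta> ?S j \<le> qbar \<theta> ?T k"
    using assms lt by (intro qbar_mono) auto
  moreover have "(\<Sum>i\<in>R. qbar \<theta> ?S i) \<le> (\<Sum>i\<in>R. qbar \<theta> ?T i)"
    using assms lt by (intro sum_mono qbar_mono) auto
  ultimately show False
    using q0bar_props(3)[of ?S \<theta>] q0bar_props(3)[of ?T \<theta>] assms lt by simp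
qed

lemma odds_diff:
  fixes a b :: real
  assumes "a < 1" "b < 1"
  shows "b / (1 - b) - a / (1 - a) = (b - a) / ((1 - a) * (1 - b))"
  using assms by (simp add: field_simps)

lemma odds_diff_ge:
  fixes a b :: real
  assumes "a \<le> b" "b < 1"
  shows "(b - a) / (1 - a)^2 \<le> b / (1 - b) - a / (1 - a)"
proof -
  have "(b - a) / ((1 - a) * (1 - a)) \<le> (b - a) / ((1 - a) * (1 - b))"
    using assms by (intro divide_left_mono mult_left_mono mult_pos_pos) auto
  then show ?thesis using odds_diff[of a b] assms by (simp add: power2_eq_square)
qed

lemma odds_diff_le:
  fixes a b m :: real
  assumes "a \<le> b" "b \<le> m" "m < 1"
  shows "b / (1 - b) - a / (1 - a) \<le> (b - a) / (1 - m)^2"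
proof -
  have "(b - a) / ((1 - a) * (1 - b)) \<le> (b - a) / ((1 - m) * (1 - m))"
    using assms by (intro divide_left_mono mult_mono mult_pos_pos) auto
  then show ?thesis using odds_diff[of a b] assms by (simp add: power2_eq_square)
qed

lemma odds_exchange:
  fixes x y :: "nat \<Rightarrow> real"
  assumes "\<And>i. i \<in> R \<Longrightarrow> y i \<le> x i" "\<And>i. i \<in> R \<Longrightarrow> x i \<le> a"
    and "(\<Sum>i\<in>R. x i - y i) \<le> b - a" "b < 1"
  shows "(\<Sum>i\<in>R. x i / (1 - x i) - y i / (1 - y i)) \<le> b / (1 - b) - a / (1 - a)"
proof -
  have ab: "a \<le> b" using assms(1,3) sum_nonneg[of R "\<lambda>i. x i - y i"] by fastforce
  have "(\<Sum>i\<in>R. x i / (1 - x i) - y i / (1 - y i)) \<le> (\<Sum>i\<in>R. (x i - y i) / (1 - a)^2)"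
    using assms ab by (intro sum_mono odds_diff_le) auto
  also have "\<dots> = (\<Sum>i\<in>R. x i - y i) / (1 - a)^2" by (simp add: sum_divide_distrib)
  also have "\<dots> \<le> (b - a) / (1 - a)^2" using assms(3) by (simp add: divide_right_mono)
  also have "\<dots> \<le> b / (1 - b) - a / (1 - a)" using ab assms(4) by (rule odds_diff_ge)
  finally show ?thesis .
qed

lemma re_insert:
  assumes "finite R" "j \<notin> R"
  shows "re \<theta> (insert j R) = qbar \<theta> (insert j R) j / (1 - qbar \<theta> (insert j R) j)
    + (\<Sum>i\<in>R. qbar \<theta> (insert j R) i / (1 - qbar \<theta> (insert j R) i))"
  using assms by (simp add: re_def)

lemma re_replace_le:
  assumes fin: "finite R" and "j \<notin> R" "k \<notin> R" and jk: "\<theta> j \<le> \<theta> k"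
    and below_j: "\<And>i. i \<in> R \<Longrightarrow> \<theta> i \<le> \<theta> j"
  shows "re \<theta> (insert j R) \<le> re \<theta> (insert k R)"
proof -
  let ?S = "insert j R" and ?T = "insert k R"
  let ?x = "qbar \<theta> ?S" and ?y = "qbar \<theta> ?T"
  have q0: "q0bar \<theta> ?T \<le> q0bar \<theta> ?S"
    using q0bar_replace_antimono assms by blast
  have "(\<Sum>i\<in>R. ?x i - ?y i) \<le> ?y k - ?x j"
    using q0bar_props(3)[of ?S \<theta>] q0bar_props(3)[of ?T \<theta>] assms q0
    by (simp add: sum_subtractf)
  then have "(\<Sum>i\<in>R. ?x i / (1 - ?x i) - ?y i / (1 - ?y i))
      \<le> ?y k / (1 - ?y k) - ?x j / (1 - ?x j)"
    using assms q0 qbar_bounds[of ?T \<theta> k]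
    by (intro odds_exchange qbar_mono) auto
  then show ?thesis using assms by (simp add: re_insert sum_subtractf)
qed

lemma re_swap_in_top_product:
  assumes mono: "\<And>i j. 1 \<le> i \<Longrightarrow> i \<le> j \<Longrightarrow> j \<le> n \<Longrightarrow> \<theta> j \<le> \<theta> i"
    and S: "S \<subseteq> {1..n}" "S \<noteq> {}" "1 \<notin> S"
  shows "re \<theta> S \<le> re \<theta> (insert 1 (S - {Min S}))"
proof -
  let ?j = "Min S"
  have fin: "finite S" using S(1) finite_subset by blast
  then have j: "?j \<in> S" "\<And>i. i \<in> S \<Longrightarrow> ?j \<le> i" using S(2) by auto
  have "re \<theta> (insert ?j (S - {?j})) \<le> re \<theta> (insert 1 (S - {?j}))"
  proof (rule re_replace_le)
    show "\<theta> ?j \<le> \<theta> 1" using j(1) S(1) by (intro mono) auto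
    show "\<theta> i \<le> \<theta> ?j" if "i \<in> S - {?j}" for i
      using that j S(1) by (intro mono) auto
  qed (use fin j S(3) in auto)
  then show ?thesis using j(1) by (simp add: insert_absorb)
qed

lemma optimal_set_containing_top_product:
  assumes mono: "\<And>i j. 1 \<le> i \<Longrightarrow> i \<le> j \<Longrightarrow> j \<le> n \<Longrightarrow> \<theta> j \<le> \<theta> i" and "1 \<le> n"
  shows "\<exists>T. T \<subseteq> {1..n} \<and> 1 \<in> T \<and> (\<forall>U. U \<subseteq> {1..n} \<longrightarrow> re \<theta> U \<le> re \<theta> T)"
proof -
  let ?M = "Max (re \<theta> ` Pow {1..n})"
  have "?M \<in> re \<theta> ` Pow {1..n}" by (intro Max_in) auto
  then obtain U where U: "U \<subseteq> {1..n}" "re \<theta> U = ?M" by auto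
  have opt: "re \<theta> U' \<le> re \<theta> U" if "U' \<subseteq> {1..n}" for U'
    using that U(2) by (auto intro: Max_ge)
  obtain T where "T \<subseteq> {1..n}" "1 \<in> T" "re \<theta> U \<le> re \<theta> T"
  proof (cases "1 \<in> U")
    case False
    show ?thesis
    proof (cases "U = {}")
      case True
      then show ?thesis using that[of "{1}"] re_nonneg[of \<theta> "{1}"] assms(2)
        by (simp add: re_def)
    next
      case False
      then have "re \<theta> U \<le> re \<theta> (insert 1 (U - {Min U}))"
        using re_swap_in_top_product[of n \<theta> U] mono U(1) \<open>1 \<notin> U\<close> by blast
      then show ?thesis using that[of "insert 1 (U - {Min U})"] U(1) assms(2) by auto
    qed
  qed (use U(1) in auto)
  then show ?thesis using opt by (meson order_trans)
qed

theorem lemma4: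
  fixes n :: nat and \<theta> :: "nat \<Rightarrow> real" and S :: "nat set"
  assumes mono: "\<And>i j. 1 \<le> i \<Longrightarrow> i \<le> j \<Longrightarrow> j \<le> n \<Longrightarrow> \<theta> j \<le> \<theta> i"
    and nonneg: "\<And>i. 1 \<le> i \<Longrightarrow> i \<le> n \<Longrightarrow> 0 \<le> \<theta> i"
    and S_sub: "S \<subseteq> {1..n}" and S_ne: "S \<noteq> {}" and one_notin: "1 \<notin> S"
  shows "re \<theta> (insert 1 (S - {Min S})) \<ge> re \<theta> S
    \<and> (\<exists>T. T \<subseteq> {1..n} \<and> 1 \<in> T \<and> (\<forall>U. U \<subseteq> {1..n} \<longrightarrow> re \<theta> U \<le> re \<theta> T))"
proof
  show "re \<theta> S \<le> re \<theta> (insert 1 (S - {Min S}))"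
    using re_swap_in_top_product mono S_sub S_ne one_notin by blast
  have "1 \<le> n" using S_sub S_ne by fastforce
  then show "\<exists>T. T \<subseteq> {1..n} \<and> 1 \<in> T \<and> (\<forall>U. U \<subseteq> {1..n} \<longrightarrow> re \<theta> U \<le> re \<theta> T)"
    using optimal_set_containing_top_product mono by blast
qed

end
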